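(* Let $X$ be a Hilbert space and let $B$ be a bounded self-adjoint operator on $X$ with $\rho(B)=\|B\|=1$ such that $-1$ is not an eigenvalue of $B$. Let $P$ be the orthogonal projection onto $\ker(I-B)$ and let $f\in X$ satisfy $Pf=0$. Then for every $x_0\in X$ the successive approximations $x_{n+1}=Bx_n+f$ satisfy $\|x_n-Bx_n-f\|\to 0$ as $n\to\infty$ (equivalently, the corrections $x_{n+1}-x_n$ tend to zero). No solvability of $x=Bx+f$ is assumed.
   Context: $I$ denotes the identity operator on $X$. *)

theory Defs
  imports "HOL-Analysis.Analysis"
begin

definition self_adjoint :: "('a::real_inner \<Rightarrow> 'a) \<Rightarrow> bool" where
  "self_adjoint B \<longleftrightarrow> bounded_linear B \<and> (\<forall>x y. inner (B x) y = inner x (B y))"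

text \<open>Spectral radius of a bounded operator, via Gelfand's formula
  rho(B) = lim_n ||B^n||^(1/n).\<close>
definition spectral_radius :: "('a::real_normed_vector \<Rightarrow> 'a) \<Rightarrow> real" where
  "spectral_radius B = lim (\<lambda>n. onorm (B ^^ Suc n) powr (1 / real (Suc n)))"

definition is_orth_proj :: "('a::real_inner \<Rightarrow> 'a) \<Rightarrow> 'a set \<Rightarrow> bool" where
  "is_orth_proj P K \<longleftrightarrow> (\<forall>x. P x \<in> K \<and> (\<forall>y\<in>K. inner (x - P x) y = 0))"

end

theory Submission
  imports Defs
begin

text \<open>The corrections \<open>d\<^sub>n = x\<^sub>n\<^sub>+\<^sub>1 - x\<^sub>n\<close> satisfy \<open>d\<^sub>n = B\<^sup>n d\<^sub>0\<close>, and \<open>d\<^sub>0 = f - (I - B) x\<^sub>0\<close>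
  is orthogonal to \<open>ker (I - B)\<close>. So it suffices to show that \<open>B\<^sup>n v \<rightarrow> 0\<close> for a self-adjoint
  contraction \<open>B\<close> without eigenvalue \<open>-1\<close> and \<open>v \<perp> ker (I - B)\<close>.
  Self-adjointness gives \<open>\<langle>B\<^sup>i v, B\<^sup>j v\<rangle> = \<langle>v, B\<^sup>i\<^sup>+\<^sup>j v\<rangle>\<close>, hence
  \<open>\<parallel>B\<^sup>2\<^sup>n v - B\<^sup>2\<^sup>m v\<parallel>\<^sup>2 = a\<^sub>2\<^sub>n + a\<^sub>2\<^sub>m - 2 a\<^sub>n\<^sub>+\<^sub>m\<close> with the decreasing, hence convergent,
  \<open>a\<^sub>k = \<parallel>B\<^sup>k v\<parallel>\<^sup>2\<close>. Thus the even iterates converge to some \<open>u\<close> with \<open>B\<^sup>2 u = u\<close> and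
  \<open>u \<perp> ker (I - B)\<close>. Then \<open>u + B u\<close> is a fixed point orthogonal to itself, so \<open>B u = -u\<close>,
  and \<open>u = 0\<close> because \<open>-1\<close> is not an eigenvalue.\<close>

lemma self_adjoint_funpow:
  fixes B :: "'a::real_inner \<Rightarrow> 'a"
  assumes "self_adjoint B"
  shows "inner ((B ^^ k) u) w = inner u ((B ^^ k) w)"
proof (induction k arbitrary: w)
  case 0
  then show ?case by simp
next
  case (Suc k)
  have "inner (B ((B ^^ k) u)) w = inner ((B ^^ k) u) (B w)"
    using assms unfolding self_adjoint_def by blast
  then show ?case by (simp add: Suc.IH funpow_swap1)
qed

lemma self_adjoint_inner_funpow:
  fixes B :: "'a::real_inner \<Rightarrow> 'a"
  assumes "self_adjoint B"
  shows "inner ((B ^^ i) v) ((B ^^ j) v) = inner v ((B ^^ (i + j)) v)"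
  by (simp add: self_adjoint_funpow[OF assms] funpow_add)

lemma self_adjoint_inner_even_iterates:
  fixes B :: "'a::real_inner \<Rightarrow> 'a"
  assumes "self_adjoint B"
  shows "inner ((B ^^ (2 * n)) v) ((B ^^ (2 * m)) v) = (norm ((B ^^ (n + m)) v))\<^sup>2"
proof -
  have "2 * n + 2 * m = (n + m) + (n + m)" by simp
  then have "inner ((B ^^ (2 * n)) v) ((B ^^ (2 * m)) v) = inner v ((B ^^ ((n + m) + (n + m))) v)"
    using self_adjoint_inner_funpow[OF assms] by metis
  also have "\<dots> = inner ((B ^^ (n + m)) v) ((B ^^ (n + m)) v)"
    using self_adjoint_inner_funpow[OF assms] by simp
  finally show ?thesis by (simp add: power2_norm_eq_inner)
qed

lemma nonexpansive_iterates_norm_convergent: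
  fixes B :: "'a::real_normed_vector \<Rightarrow> 'a"
  assumes "\<And>x. norm (B x) \<le> norm x"
  shows "convergent (\<lambda>n. norm ((B ^^ n) v))"
proof -
  have "norm (B ((B ^^ n) v)) \<le> norm ((B ^^ n) v)" for n
    by (rule assms)
  then have "decseq (\<lambda>n. norm ((B ^^ n) v))"
    by (simp add: decseq_Suc_iff)
  then show ?thesis
    by (rule decseq_convergent[of _ 0]) (auto simp: convergent_def)
qed

lemma self_adjoint_nonexpansive_even_iterates_Cauchy:
  fixes B :: "'a::real_inner \<Rightarrow> 'a"
  assumes sa: "self_adjoint B" and nonexp: "\<And>x. norm (B x) \<le> norm x"
  shows "Cauchy (\<lambda>k. (B ^^ (2 * k)) v)"
proof (rule metric_CauchyI)
  define a where "a n = (norm ((B ^^ n) v))\<^sup>2" for n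
  obtain l where "(\<lambda>n. norm ((B ^^ n) v)) \<longlonglongrightarrow> l"
    using nonexpansive_iterates_norm_convergent[OF nonexp] by (auto simp: convergent_def)
  then have a_lim: "a \<longlonglongrightarrow> l\<^sup>2"
    unfolding a_def by (intro tendsto_intros)
  have inner_eq: "inner ((B ^^ (2 * n)) v) ((B ^^ (2 * m)) v) = a (n + m)" for n m
    unfolding a_def by (rule self_adjoint_inner_even_iterates[OF sa])
  have dist_sq: "(dist ((B ^^ (2 * n)) v) ((B ^^ (2 * m)) v))\<^sup>2 = a (2 * n) + a (2 * m) - 2 * a (n + m)"
    for n m
  proof -
    let ?x = "(B ^^ (2 * n)) v" and ?y = "(B ^^ (2 * m)) v"
    have "(dist ?x ?y)\<^sup>2 = inner ?x ?x + inner ?y ?y - 2 * inner ?x ?y"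
      by (simp add: dist_norm power2_norm_eq_inner inner_diff_left inner_diff_right inner_commute[of ?y ?x])
    then show ?thesis
      using inner_eq[of n n] inner_eq[of m m] inner_eq[of n m] by (metis mult_2)
  qed
  fix e :: real
  assume "e > 0"
  then have "e\<^sup>2 / 4 > 0"
    by simp
  then obtain N where N: "\<And>k. k \<ge> N \<Longrightarrow> \<bar>a k - l\<^sup>2\<bar> < e\<^sup>2 / 4"
    using a_lim unfolding LIMSEQ_def dist_real_def by blast
  have "dist ((B ^^ (2 * n)) v) ((B ^^ (2 * m)) v) < e" if "n \<ge> N" "m \<ge> N" for n m
  proof -
    have "(dist ((B ^^ (2 * n)) v) ((B ^^ (2 * m)) v))\<^sup>2 < e\<^sup>2"
      using N[of "2 * n"] N[of "2 * m"] N[of "n + m"] that unfolding dist_sq by linarith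
    then show ?thesis
      using \<open>e > 0\<close> by (auto intro: power_less_imp_less_base)
  qed
  then show "\<exists>M. \<forall>m\<ge>M. \<forall>n\<ge>M. dist ((B ^^ (2 * m)) v) ((B ^^ (2 * n)) v) < e"
    by blast
qed

lemma self_adjoint_orthogonal_fixed_points_invariant:
  fixes B :: "'a::real_inner \<Rightarrow> 'a"
  assumes "self_adjoint B" and "\<And>y. B y = y \<Longrightarrow> inner v y = 0" and "B y = y"
  shows "inner ((B ^^ n) v) y = 0"
proof -
  have "(B ^^ n) y = y"
    using \<open>B y = y\<close> by (induction n) auto
  then show ?thesis
    using assms by (simp add: self_adjoint_funpow)
qed

lemma self_adjoint_involutive_orthogonal_fixed_points:
  fixes B :: "'a::real_inner \<Rightarrow> 'a"
  assumes sa: "self_adjoint B" and "B (B u) = u" and orth: "\<And>y. B y = y \<Longrightarrow> inner u y = 0"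
  shows "B u = - u"
proof -
  have lin: "linear B"
    using sa unfolding self_adjoint_def by (simp add: bounded_linear.linear)
  define z where "z = u + B u"
  have Bz: "B z = z"
    unfolding z_def using \<open>B (B u) = u\<close> linear_add[OF lin] by (simp add: add.commute)
  have "inner z z = inner u z + inner u (B z)"
    using sa unfolding z_def self_adjoint_def by (simp add: inner_add_left)
  also have "\<dots> = 0"
    using orth[OF Bz] Bz by simp
  finally have "z = 0" by simp
  then show ?thesis
    unfolding z_def by (simp add: eq_neg_iff_add_eq_0 add.commute)
qed

theorem self_adjoint_nonexpansive_iterates_tendsto_zero:
  fixes B :: "'a::{real_inner, complete_space} \<Rightarrow> 'a"
  assumes sa: "self_adjoint B"
    and nonexp: "\<And>x. norm (B x) \<le> norm x"
    and no_neg_one: "\<And>u. B u = - u \<Longrightarrow> u = 0"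
    and orth: "\<And>y. B y = y \<Longrightarrow> inner v y = 0"
  shows "(\<lambda>n. (B ^^ n) v) \<longlonglongrightarrow> 0"
proof -
  define r where "r k = (B ^^ (2 * k)) v" for k
  obtain u where r_lim: "r \<longlonglongrightarrow> u"
    using self_adjoint_nonexpansive_even_iterates_Cauchy[OF sa nonexp]
    unfolding r_def Cauchy_convergent_iff convergent_def by blast
  have "isCont B y" for y
    using sa unfolding self_adjoint_def by (simp add: linear_continuous_at)
  then have "(\<lambda>k. B (B (r k))) \<longlonglongrightarrow> B (B u)"
    using r_lim by (metis isCont_tendsto_compose)
  moreover have "(\<lambda>k. B (B (r k))) = (\<lambda>k. r (Suc k))"
    by (simp add: r_def funpow_swap1)
  ultimately have "B (B u) = u"
    using LIMSEQ_unique LIMSEQ_Suc[OF r_lim] by metis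
  moreover have "inner u y = 0" if "B y = y" for y
  proof -
    have "(\<lambda>k. inner (r k) y) \<longlonglongrightarrow> inner u y"
      using r_lim by (intro tendsto_intros)
    moreover have "(\<lambda>k. inner (r k) y) = (\<lambda>k. 0)"
      unfolding r_def using self_adjoint_orthogonal_fixed_points_invariant[OF sa orth that] by simp
    ultimately have "(\<lambda>k. 0) \<longlonglongrightarrow> inner u y"
      by simp
    then show ?thesis
      using LIMSEQ_unique tendsto_const by metis
  qed
  ultimately have "B u = - u"
    by (rule self_adjoint_involutive_orthogonal_fixed_points[OF sa])
  then have "u = 0"
    by (rule no_neg_one)
  obtain l where norm_lim: "(\<lambda>n. norm ((B ^^ n) v)) \<longlonglongrightarrow> l"
    using nonexpansive_iterates_norm_convergent[OF nonexp] by (auto simp: convergent_def)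
  have "(\<lambda>k. norm ((B ^^ (2 * k)) v)) \<longlonglongrightarrow> l"
    using LIMSEQ_subseq_LIMSEQ[OF norm_lim, of "\<lambda>k. 2 * k"] by (simp add: strict_mono_def o_def)
  moreover have "(\<lambda>k. norm ((B ^^ (2 * k)) v)) \<longlonglongrightarrow> 0"
    using tendsto_norm[OF r_lim] \<open>u = 0\<close> by (simp add: r_def)
  ultimately have "l = 0"
    using LIMSEQ_unique by blast
  then show ?thesis
    using norm_lim by (simp add: tendsto_norm_zero_iff)
qed

theorem theorem1p2:
  fixes B P :: "'a::{real_inner, complete_space} \<Rightarrow> 'a"
    and f :: 'a and x :: "nat \<Rightarrow> 'a"
  assumes "self_adjoint B"
    and "spectral_radius B = 1"
    and "onorm B = 1"
    and "\<forall>v. B v = - v \<longrightarrow> v = 0"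
    and "is_orth_proj P {v. v - B v = 0}"
    and "P f = 0"
    and "\<forall>n. x (Suc n) = B (x n) + f"
  shows "(\<lambda>n. norm (x n - B (x n) - f)) \<longlonglongrightarrow> 0"
proof -
  have lin: "linear B" and sym: "\<And>u w. inner (B u) w = inner u (B w)"
    using assms(1) unfolding self_adjoint_def by (auto simp: bounded_linear.linear)
  have nonexp: "norm (B y) \<le> norm y" for y
    using onorm[of B y] assms(1,3) unfolding self_adjoint_def by simp
  define d where "d n = x (Suc n) - x n" for n
  have "d (Suc n) = B (d n)" for n
    using assms(7) unfolding d_def by (simp add: linear_diff[OF lin])
  then have d_iter: "d n = (B ^^ n) (d 0)" for n
    by (induction n) simp_all
  have "inner (d 0) y = 0" if "B y = y" for y
  proof -
    have "y \<in> {v. v - B v = 0}"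
      using that by simp
    then have "inner (f - P f) y = 0"
      using assms(5) unfolding is_orth_proj_def by blast
    then have "inner f y = 0"
      using assms(6) by simp
    then show ?thesis
      using assms(7) sym[of "x 0" y] that by (simp add: d_def inner_diff_left inner_add_left)
  qed
  then have "(\<lambda>n. (B ^^ n) (d 0)) \<longlonglongrightarrow> 0"
    using self_adjoint_nonexpansive_iterates_tendsto_zero[OF assms(1) nonexp] assms(4) by blast
  then have "d \<longlonglongrightarrow> 0"
    unfolding d_iter[symmetric] .
  moreover have "norm (x n - B (x n) - f) = norm (d n)" for n
  proof -
    have "x n - B (x n) - f = - d n"
      using assms(7) by (simp add: d_def)
    then show ?thesis
      by simp
  qed
  ultimately show ?thesis
    by (simp add: tendsto_norm_zero_iff)
qed

end
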